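(* For $i\in\{1,\dots,n\}$ let $g_i:\mathbb{R}\to]-\infty,+\infty]$ be proper, lower semicontinuous and convex, and define $g:\mathbb{R}^n\to]-\infty,+\infty]$ by $g(x)=\sum_{i=1}^n g_i(x_i)$. Then for every $\alpha>0$ and every $\eta\in\mathbb{R}^n_{>0}$, both $\mathrm{prox}_{\alpha g}$ (which equals the resolvent $J_{\alpha\partial g}=(\mathrm{Id}+\alpha\partial g)^{-1}$) and $2\,\mathrm{prox}_{\alpha g}-\mathrm{Id}$ (which equals $R_{\alpha\partial g}=2J_{\alpha\partial g}-\mathrm{Id}$) are nonexpansive with respect to $\|\cdot\|_{\infty,[\eta]^{-1}}$, i.e., $\|T(x)-T(y)\|_{\infty,[\eta]^{-1}}\le\|x-y\|_{\infty,[\eta]^{-1}}$ for all $x,y$ for each of these maps $T$.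
   Context: For a proper lower semicontinuous convex $h:\mathbb{R}^n\to]-\infty,+\infty]$, the proximal operator is $\mathrm{prox}_h(x)=\arg\min_{z\in\mathbb{R}^n}\tfrac12\|x-z\|_2^2+h(z)$ (single-valued), and $\partial h$ denotes the subdifferential. For $\eta\in\mathbb{R}^n_{>0}$, $\|x\|_{\infty,[\eta]^{-1}}=\max_i|x_i|/\eta_i$. *)

theory Defs
  imports "HOL-Analysis.Analysis"
begin

definition proper_fun :: "('a \<Rightarrow> ereal) \<Rightarrow> bool" where
  "proper_fun f \<longleftrightarrow> (\<forall>x. f x \<noteq> -\<infinity>) \<and> (\<exists>x. f x \<noteq> \<infinity>)"

definition lsc_fun :: "('a::topological_space \<Rightarrow> ereal) \<Rightarrow> bool" where
  "lsc_fun f \<longleftrightarrow> (\<forall>x. f x \<le> Liminf (at x) f)"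

definition convex_fun :: "('a::real_vector \<Rightarrow> ereal) \<Rightarrow> bool" where
  "convex_fun f \<longleftrightarrow> (\<forall>x y t. 0 \<le> t \<and> t \<le> 1 \<longrightarrow>
      f ((1 - t) *\<^sub>R x + t *\<^sub>R y) \<le> ereal (1 - t) * f x + ereal t * f y)"

definition prox :: "('a::real_normed_vector \<Rightarrow> ereal) \<Rightarrow> 'a \<Rightarrow> 'a" where
  "prox h x = (THE z. \<forall>w. ereal ((1/2) * (norm (x - z))\<^sup>2) + h z
                         \<le> ereal ((1/2) * (norm (x - w))\<^sup>2) + h w)"

definition sep_fun :: "('n::finite \<Rightarrow> real \<Rightarrow> ereal) \<Rightarrow> real^'n \<Rightarrow> ereal" where
  "sep_fun gs x = (\<Sum>i\<in>UNIV. gs i (x $ i))"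

definition wnorm_inf :: "real^'n::finite \<Rightarrow> real^'n \<Rightarrow> real" where
  "wnorm_inf \<eta> x = Max (range (\<lambda>i. \<bar>x $ i\<bar> / \<eta> $ i))"

end

theory Submission
  imports Defs
begin

text \<open>The proximal map of a separable function acts coordinatewise, each coordinate being
the proximal map of a proper lsc convex function on the real line. Such a map is firmly
nonexpansive: comparing the variational inequalities characterising \<open>p = prox h x\<close> and
\<open>q = prox h y\<close> gives \<open>(p - q)\<^sup>2 \<le> (p - q) (x - y)\<close>, hence both \<open>\<bar>p - q\<bar>\<close> and
\<open>\<bar>2 (p - q) - (x - y)\<bar>\<close> are at most \<open>\<bar>x - y\<bar>\<close>. Coordinatewise bounds of this kind
pass to every weighted maximum norm. The proximal point exists by the direct method: a proper
lsc convex function is bounded below by \<open>c - K \<parallel>z\<parallel>\<close>, which makes the proximal objective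
coercive.\<close>

section \<open>Lower semicontinuity\<close>

lemma lsc_fun_iff_eventually:
  "lsc_fun f \<longleftrightarrow> (\<forall>x y. y < f x \<longrightarrow> eventually (\<lambda>z. y < f z) (nhds x))"
  unfolding lsc_fun_def le_Liminf_iff eventually_nhds_conv_at by blast

lemma lsc_fun_bounded_below_near:
  fixes f :: "'a::metric_space \<Rightarrow> ereal"
  assumes "lsc_fun f" and "y < f z0"
  obtains \<delta> where "\<delta> > 0" and "\<And>z. dist z z0 < \<delta> \<Longrightarrow> y < f z"
  using assms unfolding lsc_fun_iff_eventually eventually_nhds_metric by blast

lemma lsc_fun_scale:
  assumes "lsc_fun f" and "0 \<le> c"
  shows "lsc_fun (\<lambda>z. ereal c * f z)"
  unfolding lsc_fun_def
proof
  fix x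
  show "ereal c * f x \<le> Liminf (at x) (\<lambda>z. ereal c * f z)"
  proof (cases "at x = bot")
    case False
    then show ?thesis
      using assms by (simp add: Liminf_ereal_mult_left lsc_fun_def ereal_mult_left_mono)
  qed simp
qed

lemma lsc_fun_add_continuous:
  fixes q :: "'a::topological_space \<Rightarrow> real" and h :: "'a \<Rightarrow> ereal"
  assumes q: "continuous_on UNIV q" and h: "lsc_fun h" and nm: "\<And>z. h z \<noteq> -\<infinity>"
  shows "lsc_fun (\<lambda>z. ereal (q z) + h z)"
  unfolding lsc_fun_iff_eventually
proof (intro allI impI)
  fix x y
  assume y: "y < ereal (q x) + h x"
  show "eventually (\<lambda>z. y < ereal (q z) + h z) (nhds x)"
  proof (cases y)
    case (real a)
    with y nm[of x] have "ereal (a - q x) < h x" by (cases "h x") auto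
    then obtain r where r: "a - q x < r" "ereal r < h x"
      using ereal_dense2 by force
    have "eventually (\<lambda>z. ereal r < h z) (nhds x)"
      using h r(2) unfolding lsc_fun_iff_eventually by blast
    moreover have "eventually (\<lambda>z. z \<in> {z. a - r < q z}) (nhds x)"
      using r(1) by (intro eventually_nhds_in_open open_Collect_less q continuous_on_const) auto
    ultimately show ?thesis
    proof eventually_elim
      case (elim z)
      then show ?case using nm[of z] real by (cases "h z") auto
    qed
  qed (use y nm in auto)
qed

lemma lsc_fun_closed_sublevel:
  assumes "lsc_fun F"
  shows "closed {z. F z \<le> c}"
proof -
  have "open {z. c < F z}"
  proof (subst open_subopen, intro ballI)
    fix x assume "x \<in> {z. c < F z}"
    then have "eventually (\<lambda>z. c < F z) (nhds x)"
      using assms by (simp add: lsc_fun_iff_eventually)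
    then show "\<exists>T. open T \<and> x \<in> T \<and> T \<subseteq> {z. c < F z}"
      by (auto simp: eventually_nhds)
  qed
  moreover have "{z. F z \<le> c} = - {z. c < F z}"
    by (auto simp: not_less)
  ultimately show ?thesis by (simp add: closed_Compl)
qed

lemma lsc_fun_attains_min:
  fixes F :: "'a::heine_borel \<Rightarrow> ereal"
  assumes lsc: "lsc_fun F" and bnd: "bounded {z. F z \<le> F z0}"
  obtains p where "\<And>w. F p \<le> F w"
proof -
  define m where "m = (INF z. F z)"
  define S where "S = {z. F z \<le> F z0}"
  have "compact S"
    using bnd lsc_fun_closed_sublevel[OF lsc] by (simp add: S_def compact_eq_bounded_closed)
  then have "S \<inter> (\<Inter>c\<in>{c. m < c \<and> c \<le> F z0}. {z. F z \<le> c}) \<noteq> {}"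
  proof (rule compact_imp_fip_image)
    fix I assume I: "finite I" "I \<subseteq> {c. m < c \<and> c \<le> F z0}"
    show "S \<inter> (\<Inter>c\<in>I. {z. F z \<le> c}) \<noteq> {}"
    proof (cases "I = {}")
      case False
      have "Min I \<in> I" using I(1) False by (rule Min_in)
      with I(2) have "m < Min I" "Min I \<le> F z0" by auto
      then obtain z where z: "F z < Min I" unfolding m_def INF_less_iff by blast
      have "F z \<le> c" if "c \<in> I" for c
        using z Min_le[OF I(1) that] by simp
      moreover have "z \<in> S"
        using z \<open>Min I \<le> F z0\<close> by (simp add: S_def)
      ultimately show ?thesis by blast
    qed (auto simp: S_def)
  qed (simp add: lsc_fun_closed_sublevel[OF lsc])
  then obtain p where p: "p \<in> S" "\<And>c. m < c \<Longrightarrow> c \<le> F z0 \<Longrightarrow> F p \<le> c" by blast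
  have "F p \<le> m"
  proof (rule dense_ge)
    fix c assume "m < c"
    show "F p \<le> c"
    proof (cases "c \<le> F z0")
      case False
      then show ?thesis using p(1) by (simp add: S_def)
    qed (rule p(2)[OF \<open>m < c\<close>])
  qed
  moreover have "m \<le> F w" for w
    unfolding m_def by (rule INF_lower) simp
  ultimately show thesis
    using that order.trans by blast
qed

section \<open>Convexity\<close>

lemma convex_fun_add:
  assumes "convex_fun f" and "convex_fun g"
  shows "convex_fun (\<lambda>z. f z + g z)"
  unfolding convex_fun_def
proof (intro allI impI)
  fix x y and t :: real
  assume t: "0 \<le> t \<and> t \<le> 1"
  have "f ((1 - t) *\<^sub>R x + t *\<^sub>R y) + g ((1 - t) *\<^sub>R x + t *\<^sub>R y)
      \<le> (ereal (1 - t) * f x + ereal t * f y) + (ereal (1 - t) * g x + ereal t * g y)"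
    using assms t unfolding convex_fun_def by (intro add_mono) auto
  also have "\<dots> = ereal (1 - t) * (f x + g x) + ereal t * (f y + g y)"
    using t by (simp add: ereal_pos_distrib add_ac)
  finally show "f ((1 - t) *\<^sub>R x + t *\<^sub>R y) + g ((1 - t) *\<^sub>R x + t *\<^sub>R y)
      \<le> ereal (1 - t) * (f x + g x) + ereal t * (f y + g y)" .
qed

lemma convex_fun_sum:
  assumes "\<And>i. i \<in> I \<Longrightarrow> convex_fun (f i)"
  shows "convex_fun (\<lambda>z. \<Sum>i\<in>I. f i z)"
  using assms
proof (induction I rule: infinite_finite_induct)
  case (insert i I)
  then have "convex_fun (\<lambda>z. f i z + (\<Sum>i\<in>I. f i z))"
    by (intro convex_fun_add) auto
  with insert.hyps show ?case by simp
qed (simp_all add: convex_fun_def)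

lemma convex_fun_compose_linear:
  assumes "convex_fun f" and "linear L"
  shows "convex_fun (\<lambda>z. f (L z))"
  using assms unfolding convex_fun_def by (simp add: linear_add linear_scale)

lemma convex_fun_scale:
  assumes "convex_fun f" and "0 \<le> c"
  shows "convex_fun (\<lambda>z. ereal c * f z)"
  unfolding convex_fun_def
proof (intro allI impI)
  fix x y and t :: real
  assume t: "0 \<le> t \<and> t \<le> 1"
  have "ereal c * f ((1 - t) *\<^sub>R x + t *\<^sub>R y) \<le> ereal c * (ereal (1 - t) * f x + ereal t * f y)"
    using assms t unfolding convex_fun_def by (intro ereal_mult_left_mono) auto
  also have "\<dots> = ereal (1 - t) * (ereal c * f x) + ereal t * (ereal c * f y)"
    using assms(2) by (simp add: ereal_pos_distrib mult.left_commute)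
  finally show "ereal c * f ((1 - t) *\<^sub>R x + t *\<^sub>R y)
      \<le> ereal (1 - t) * (ereal c * f x) + ereal t * (ereal c * f y)" .
qed

lemma proper_fun_scale:
  assumes "proper_fun f" and "0 < c"
  shows "proper_fun (\<lambda>z. ereal c * f z)"
  using assms unfolding proper_fun_def by (auto simp: ereal_mult_eq_MInfty ereal_mult_eq_PInfty)

lemma convex_fun_lower_bound_from_ball:
  fixes f :: "'a::real_normed_vector \<Rightarrow> ereal"
  assumes cv: "convex_fun f" and z0: "f z0 = ereal c0" and "\<delta> > 0"
    and ball: "\<And>z. dist z z0 < \<delta> \<Longrightarrow> ereal b < f z"
  shows "ereal (b - 2 * (c0 - b) / \<delta> * dist z z0) \<le> f z"
  \<comment> \<open>Outside the ball, compare with the point of the segment from \<open>z0\<close> to \<open>z\<close> at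
    distance \<open>\<delta>/2\<close> from \<open>z0\<close>.\<close>
proof -
  have "b < c0" using ball[of z0] \<open>\<delta> > 0\<close> z0 by simp
  then have K: "0 \<le> 2 * (c0 - b) / \<delta>" using \<open>\<delta> > 0\<close> by simp
  show ?thesis
  proof (cases "dist z z0 < \<delta>")
    case True
    have "b - 2 * (c0 - b) / \<delta> * dist z z0 \<le> b"
      using mult_nonneg_nonneg[OF K zero_le_dist[of z z0]] by linarith
    then have "ereal (b - 2 * (c0 - b) / \<delta> * dist z z0) \<le> ereal b" by simp
    also have "\<dots> \<le> f z" using ball[OF True] by (rule less_imp_le)
    finally show ?thesis .
  next
    case False
    define u where "u = dist z z0"
    define t where "t = \<delta> / (2 * u)"
    have u: "\<delta> \<le> u" using False by (simp add: u_def)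
    have t: "0 < t" "t \<le> 1" using u \<open>\<delta> > 0\<close> by (auto simp: t_def field_simps)
    have "dist ((1 - t) *\<^sub>R z0 + t *\<^sub>R z) z0 = t * u"
    proof -
      have "(1 - t) *\<^sub>R z0 + t *\<^sub>R z - z0 = t *\<^sub>R (z - z0)" by (simp add: algebra_simps)
      then show ?thesis using t by (simp add: dist_norm u_def)
    qed
    also have "\<dots> < \<delta>" using u \<open>\<delta> > 0\<close> by (simp add: t_def)
    finally have "ereal b < f ((1 - t) *\<^sub>R z0 + t *\<^sub>R z)" by (rule ball)
    also have "\<dots> \<le> ereal (1 - t) * f z0 + ereal t * f z"
      using cv t unfolding convex_fun_def by auto
    finally have lt: "ereal b < ereal ((1 - t) * c0) + ereal t * f z" by (simp add: z0)
    show ?thesis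
    proof (cases "f z")
      case (real v)
      have "b < (1 - t) * c0 + t * v" using lt real by simp
      then have "c0 - (c0 - b) / t < v" using t by (simp add: field_simps)
      moreover have "(c0 - b) / t = 2 * (c0 - b) / \<delta> * u"
        using u \<open>\<delta> > 0\<close> by (simp add: t_def field_simps)
      ultimately show ?thesis using real \<open>b < c0\<close> by (simp add: u_def)
    qed (use lt t in auto)
  qed
qed

lemma proper_lsc_convex_minorant:
  fixes h :: "'a::real_normed_vector \<Rightarrow> ereal"
  assumes "proper_fun h" and "lsc_fun h" and "convex_fun h"
  shows "\<exists>c K. 0 \<le> K \<and> (\<forall>z. ereal (c - K * norm z) \<le> h z)"
proof -
  obtain z0 c0 where z0: "h z0 = ereal c0"
    using assms(1) unfolding proper_fun_def by (metis ereal_cases)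
  obtain \<delta> where \<delta>: "\<delta> > 0" "\<And>z. dist z z0 < \<delta> \<Longrightarrow> ereal (c0 - 1) < h z"
    using lsc_fun_bounded_below_near[OF assms(2), of "ereal (c0 - 1)" z0] z0 by auto
  define K where "K = 2 / \<delta>"
  have K: "0 \<le> K" using \<delta> by (simp add: K_def)
  have "ereal (c0 - 1 - K * norm z0 - K * norm z) \<le> h z" for z
  proof -
    have "K * dist z z0 \<le> K * norm z0 + K * norm z"
      using K norm_triangle_ineq4[of z z0]
      by (simp add: dist_norm add.commute mult_left_mono flip: distrib_left)
    then have "ereal (c0 - 1 - K * norm z0 - K * norm z)
        \<le> ereal (c0 - 1 - 2 * (c0 - (c0 - 1)) / \<delta> * dist z z0)"
      by (simp add: K_def)
    also have "\<dots> \<le> h z"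
      by (rule convex_fun_lower_bound_from_ball[OF assms(3) z0 \<delta>])
    finally show ?thesis .
  qed
  with K show ?thesis by blast
qed

section \<open>The proximal point\<close>

definition prox_objective :: "('a::real_normed_vector \<Rightarrow> ereal) \<Rightarrow> 'a \<Rightarrow> 'a \<Rightarrow> ereal" where
  "prox_objective h x w = ereal ((1/2) * (norm (x - w))\<^sup>2) + h w"

lemma prox_altdef: "prox h x = (THE p. \<forall>w. prox_objective h x p \<le> prox_objective h x w)"
  by (simp add: prox_def prox_objective_def)

lemma prox_objective_sublevel_bounded:
  fixes h :: "'a::real_normed_vector \<Rightarrow> ereal"
  assumes minor: "\<And>z. ereal (c - K * norm z) \<le> h z" and "0 \<le> K"
  shows "bounded {z. prox_objective h x z \<le> ereal M}"
proof -
  define R where "R = sqrt (4 * (M - c + K\<^sup>2 + K * norm x))"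
  have "{z. prox_objective h x z \<le> ereal M} \<subseteq> cball x R"
  proof
    fix z assume "z \<in> {z. prox_objective h x z \<le> ereal M}"
    then have "ereal ((1/2) * (norm (x - z))\<^sup>2) + h z \<le> ereal M"
      by (simp add: prox_objective_def)
    with add_left_mono[OF minor[of z]]
    have "ereal ((1/2) * (norm (x - z))\<^sup>2) + ereal (c - K * norm z) \<le> ereal M"
      by (rule order.trans)
    then have le: "(1/2) * (norm (x - z))\<^sup>2 + c - K * norm z \<le> M" by simp
    have "norm z \<le> norm (x - z) + norm x"
      using norm_triangle_ineq2[of z x] by (simp add: norm_minus_commute)
    then have "K * norm z \<le> K * norm (x - z) + K * norm x"
      using \<open>0 \<le> K\<close> by (simp add: mult_left_mono flip: distrib_left)
    moreover have "K * norm (x - z) \<le> (norm (x - z))\<^sup>2 / 4 + K\<^sup>2"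
      using sum_squares_ge_zero[of "norm (x - z) / 2 - K" 0]
      by (simp add: power2_eq_square algebra_simps)
    ultimately have "(norm (x - z))\<^sup>2 / 4 \<le> M - c + K\<^sup>2 + K * norm x"
      using le by linarith
    then show "z \<in> cball x R" by (simp add: R_def dist_norm real_le_rsqrt)
  qed
  then show ?thesis by (rule bounded_subset[OF bounded_cball])
qed

lemma prox_objective_has_minimizer:
  fixes h :: "'a::{real_normed_vector, heine_borel} \<Rightarrow> ereal"
  assumes "proper_fun h" and "lsc_fun h" and "convex_fun h"
  obtains p where "h p \<noteq> \<infinity>" and "\<And>w. prox_objective h x p \<le> prox_objective h x w"
proof -
  obtain z0 c0 where z0: "h z0 = ereal c0"
    using assms(1) unfolding proper_fun_def by (metis ereal_cases)
  obtain c K where "\<And>z. ereal (c - K * norm z) \<le> h z" "0 \<le> K"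
    using proper_lsc_convex_minorant[OF assms] by blast
  then have "bounded {z. prox_objective h x z \<le> ereal ((1/2) * (norm (x - z0))\<^sup>2 + c0)}"
    by (rule prox_objective_sublevel_bounded)
  then have bnd: "bounded {z. prox_objective h x z \<le> prox_objective h x z0}"
    by (simp add: prox_objective_def z0)
  have "\<And>z. h z \<noteq> -\<infinity>" using assms(1) by (simp add: proper_fun_def)
  with assms(2) have "lsc_fun (prox_objective h x)"
    unfolding prox_objective_def[abs_def] by (intro lsc_fun_add_continuous continuous_intros)
  then obtain p where p: "\<And>w. prox_objective h x p \<le> prox_objective h x w"
    using bnd lsc_fun_attains_min by blast
  have "h p \<noteq> \<infinity>"
  proof
    assume "h p = \<infinity>"
    with p[of z0] show False by (simp add: prox_objective_def z0)
  qed
  with p that show thesis by blast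
qed

lemma prox_objective_min_variational_ineq:
  fixes h :: "'a::real_inner \<Rightarrow> ereal"
  assumes cv: "convex_fun h" and nm: "\<And>z. h z \<noteq> -\<infinity>" and fin: "h p \<noteq> \<infinity>"
    and min: "\<And>w. prox_objective h x p \<le> prox_objective h x w"
  shows "ereal (inner (x - p) (w - p)) + h p \<le> h w"
proof (cases "h w = \<infinity>")
  case False
  obtain a where a: "h p = ereal a" using fin nm by (cases "h p") auto
  obtain b where b: "h w = ereal b" using False nm by (cases "h w") auto
  define d where "d = w - p"
  have "inner (x - p) d \<le> b - a + t * ((norm d)\<^sup>2 / 2)" if t: "0 < t" "t < 1" for t
  proof -
    have "h (p + t *\<^sub>R d) \<le> ereal (1 - t) * h p + ereal t * h w"
      using cv t unfolding convex_fun_def d_def by (auto simp: algebra_simps)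
    then obtain c where c: "h (p + t *\<^sub>R d) = ereal c" and "c \<le> (1 - t) * a + t * b"
      using nm[of "p + t *\<^sub>R d"] by (cases "h (p + t *\<^sub>R d)") (auto simp: a b)
    moreover have "(1/2) * (norm (x - p))\<^sup>2 + a \<le> (1/2) * (norm (x - (p + t *\<^sub>R d)))\<^sup>2 + c"
      using min[of "p + t *\<^sub>R d"] by (simp add: prox_objective_def a c)
    moreover have "(norm (x - (p + t *\<^sub>R d)))\<^sup>2
        = (norm (x - p))\<^sup>2 - 2 * t * inner (x - p) d + t\<^sup>2 * (norm d)\<^sup>2"
      unfolding power2_norm_eq_inner
      by (simp add: inner_diff_left inner_diff_right inner_commute algebra_simps power2_eq_square)
    ultimately have "t * inner (x - p) d \<le> t * (b - a + t * ((norm d)\<^sup>2 / 2))"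
      by (simp add: algebra_simps power2_eq_square)
    then show ?thesis using t by simp
  qed
  then have "eventually (\<lambda>t. inner (x - p) d \<le> b - a + t * ((norm d)\<^sup>2 / 2)) (at_right 0)"
    unfolding eventually_at_right_field by (intro exI[of _ 1]) auto
  moreover have "((\<lambda>t. b - a + t * ((norm d)\<^sup>2 / 2)) \<longlongrightarrow> b - a) (at_right 0)"
    by (auto intro!: tendsto_eq_intros)
  ultimately have "inner (x - p) d \<le> b - a"
    by (intro tendsto_lowerbound) auto
  then show ?thesis by (simp add: a b d_def)
qed simp

lemma prox_objective_min_firmly_nonexpansive:
  fixes h :: "'a::real_inner \<Rightarrow> ereal"
  assumes cv: "convex_fun h" and nm: "\<And>z. h z \<noteq> -\<infinity>"
    and fin: "h p \<noteq> \<infinity>" "h q \<noteq> \<infinity>"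
    and min: "\<And>w. prox_objective h x p \<le> prox_objective h x w"
      "\<And>w. prox_objective h y q \<le> prox_objective h y w"
  shows "(norm (p - q))\<^sup>2 \<le> inner (p - q) (x - y)"
proof -
  obtain a b where ab: "h p = ereal a" "h q = ereal b"
    using fin nm by (metis ereal_cases)
  have "ereal (inner (x - p) (q - p)) + h p \<le> h q"
    by (rule prox_objective_min_variational_ineq[OF cv nm fin(1) min(1)])
  moreover have "ereal (inner (y - q) (p - q)) + h q \<le> h p"
    by (rule prox_objective_min_variational_ineq[OF cv nm fin(2) min(2)])
  ultimately have "inner (x - p) (q - p) + inner (y - q) (p - q) \<le> 0"
    by (simp add: ab)
  then show ?thesis
    by (simp add: power2_norm_eq_inner inner_diff_left inner_diff_right inner_commute algebra_simps)
qed

lemma prox_eqI: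
  fixes h :: "'a::real_inner \<Rightarrow> ereal"
  assumes cv: "convex_fun h" and nm: "\<And>z. h z \<noteq> -\<infinity>" and fin: "h p \<noteq> \<infinity>"
    and min: "\<And>w. prox_objective h x p \<le> prox_objective h x w"
  shows "prox h x = p"
  unfolding prox_altdef
proof (rule the_equality)
  fix q assume q: "\<forall>w. prox_objective h x q \<le> prox_objective h x w"
  have "h q \<noteq> \<infinity>"
  proof
    assume "h q = \<infinity>"
    with q fin show False by (auto simp: prox_objective_def dest: spec[of _ p])
  qed
  then have "(norm (q - p))\<^sup>2 \<le> inner (q - p) (x - x)"
    using q by (intro prox_objective_min_firmly_nonexpansive[OF cv nm _ fin _ min]) auto
  then show "q = p" by simp
qed (use min in blast)

lemma prox_minimizes:
  fixes h :: "'a::{real_inner, heine_borel} \<Rightarrow> ereal"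
  assumes "proper_fun h" and "lsc_fun h" and "convex_fun h"
  shows "h (prox h x) \<noteq> \<infinity>" and "prox_objective h x (prox h x) \<le> prox_objective h x w"
proof -
  obtain p where p: "h p \<noteq> \<infinity>" "\<And>w. prox_objective h x p \<le> prox_objective h x w"
    using prox_objective_has_minimizer[OF assms] by blast
  moreover have "prox h x = p"
    using assms(1) p unfolding proper_fun_def by (intro prox_eqI[OF assms(3)]) auto
  ultimately show "h (prox h x) \<noteq> \<infinity>" "prox_objective h x (prox h x) \<le> prox_objective h x w"
    by auto
qed

lemma prox_firmly_nonexpansive:
  fixes h :: "'a::{real_inner, heine_borel} \<Rightarrow> ereal"
  assumes "proper_fun h" and "lsc_fun h" and "convex_fun h"
  shows "(norm (prox h x - prox h y))\<^sup>2 \<le> inner (prox h x - prox h y) (x - y)"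
  using assms(1) unfolding proper_fun_def
  by (intro prox_objective_min_firmly_nonexpansive[OF assms(3)] prox_minimizes[OF assms]) auto

section \<open>Separable functions and the weighted maximum norm\<close>

lemma sum_ereal_not_MInfty:
  fixes f :: "'a \<Rightarrow> ereal"
  assumes "\<And>i. f i \<noteq> -\<infinity>"
  shows "sum f A \<noteq> -\<infinity>"
  using assms by (induction A rule: infinite_finite_induct) auto

lemma sum_ereal_mult_left:
  fixes f :: "'a \<Rightarrow> ereal"
  assumes "0 \<le> c"
  shows "ereal c * sum f A = (\<Sum>i\<in>A. ereal c * f i)"
  using assms by (induction A rule: infinite_finite_induct) (auto simp: ereal_pos_distrib)

lemma sep_fun_scale:
  assumes "0 \<le> c"
  shows "ereal c * sep_fun gs x = sep_fun (\<lambda>i t. ereal c * gs i t) x"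
  using assms by (simp add: sep_fun_def sum_ereal_mult_left)

lemma prox_objective_sep_fun:
  "prox_objective (sep_fun gs) x w = (\<Sum>i\<in>UNIV. prox_objective (gs i) (x $ i) (w $ i))"
proof -
  have "(norm (x - w))\<^sup>2 = (\<Sum>i\<in>UNIV. (norm (x $ i - w $ i))\<^sup>2)"
    unfolding power2_norm_eq_inner inner_vec_def by simp
  then show ?thesis
    by (simp add: prox_objective_def sep_fun_def sum_distrib_left sum.distrib)
qed

lemma prox_sep_fun:
  fixes gs :: "'n::finite \<Rightarrow> real \<Rightarrow> ereal"
  assumes proper: "\<And>i. proper_fun (gs i)" and lsc: "\<And>i. lsc_fun (gs i)"
    and cv: "\<And>i. convex_fun (gs i)"
  shows "prox (sep_fun gs) x = (\<chi> i. prox (gs i) (x $ i))"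
proof (rule prox_eqI)
  have nm: "\<And>i t. gs i t \<noteq> -\<infinity>" using proper by (simp add: proper_fun_def)
  then show "\<And>z. sep_fun gs z \<noteq> -\<infinity>"
    unfolding sep_fun_def by (intro sum_ereal_not_MInfty)
  show "convex_fun (sep_fun gs)"
    unfolding sep_fun_def[abs_def]
    by (intro convex_fun_sum convex_fun_compose_linear[OF cv]
        bounded_linear.linear bounded_linear_vec_nth)
  show "sep_fun gs (\<chi> i. prox (gs i) (x $ i)) \<noteq> \<infinity>"
    using prox_minimizes(1)[OF proper lsc cv] by (simp add: sep_fun_def sum_Pinfty)
  show "prox_objective (sep_fun gs) x (\<chi> i. prox (gs i) (x $ i))
      \<le> prox_objective (sep_fun gs) x w" for w
    unfolding prox_objective_sep_fun
    by (intro sum_mono) (simp add: prox_minimizes(2)[OF proper lsc cv])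
qed

lemma firmly_nonexpansive_real_abs_le:
  fixes d e :: real
  assumes "d\<^sup>2 \<le> d * e"
  shows "\<bar>d\<bar> \<le> \<bar>e\<bar>" and "\<bar>2 * d - e\<bar> \<le> \<bar>e\<bar>"
proof -
  have "0 \<le> (d - e)\<^sup>2" by simp
  then have "d\<^sup>2 \<le> e\<^sup>2" using assms by (simp add: power2_diff)
  then show "\<bar>d\<bar> \<le> \<bar>e\<bar>" by (simp add: abs_le_square_iff)
  have "(2 * d - e)\<^sup>2 \<le> e\<^sup>2" using assms by (simp add: power2_diff power2_eq_square algebra_simps)
  then show "\<bar>2 * d - e\<bar> \<le> \<bar>e\<bar>" by (simp add: abs_le_square_iff)
qed

lemma wnorm_inf_mono:
  fixes u v \<eta> :: "real^'n::finite"
  assumes "\<And>i. \<bar>u $ i\<bar> \<le> \<bar>v $ i\<bar>" and "\<And>i. \<eta> $ i > 0"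
  shows "wnorm_inf \<eta> u \<le> wnorm_inf \<eta> v"
  unfolding wnorm_inf_def
proof (rule Max.boundedI)
  fix a assume "a \<in> range (\<lambda>i. \<bar>u $ i\<bar> / \<eta> $ i)"
  then obtain i where a: "a = \<bar>u $ i\<bar> / \<eta> $ i" by blast
  have "a \<le> \<bar>v $ i\<bar> / \<eta> $ i"
    unfolding a using assms(1) less_imp_le[OF assms(2)] by (rule divide_right_mono)
  also have "\<dots> \<le> Max (range (\<lambda>i. \<bar>v $ i\<bar> / \<eta> $ i))" by (rule Max_ge) auto
  finally show "a \<le> Max (range (\<lambda>i. \<bar>v $ i\<bar> / \<eta> $ i))" .
qed auto

theorem proposition41:
  fixes gs :: "'n::finite \<Rightarrow> real \<Rightarrow> ereal"
    and \<alpha> :: real and \<eta> :: "real^'n"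
  assumes "\<And>i. proper_fun (gs i)"
    and "\<And>i. lsc_fun (gs i)"
    and "\<And>i. convex_fun (gs i)"
    and "\<alpha> > 0"
    and "\<And>i. \<eta> $ i > 0"
  shows "(\<forall>x y. wnorm_inf \<eta> (prox (\<lambda>z. ereal \<alpha> * sep_fun gs z) x - prox (\<lambda>z. ereal \<alpha> * sep_fun gs z) y)
                 \<le> wnorm_inf \<eta> (x - y)) \<and>
         (\<forall>x y. wnorm_inf \<eta> ((2 *\<^sub>R prox (\<lambda>z. ereal \<alpha> * sep_fun gs z) x - x)
                            - (2 *\<^sub>R prox (\<lambda>z. ereal \<alpha> * sep_fun gs z) y - y))
                 \<le> wnorm_inf \<eta> (x - y))"
proof -
  define hs where "hs = (\<lambda>i t. ereal \<alpha> * gs i t)"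
  have hs: "proper_fun (hs i)" "lsc_fun (hs i)" "convex_fun (hs i)" for i
    using assms unfolding hs_def by (auto intro: proper_fun_scale lsc_fun_scale convex_fun_scale)
  have sep: "(\<lambda>z. ereal \<alpha> * sep_fun gs z) = sep_fun hs"
    using assms(4) by (simp add: hs_def sep_fun_scale)
  define P where "P = prox (\<lambda>z. ereal \<alpha> * sep_fun gs z)"
  have P: "P x $ i = prox (hs i) (x $ i)" for x i
    by (simp add: P_def sep prox_sep_fun[OF hs])
  have coord: "(P x $ i - P y $ i)\<^sup>2 \<le> (P x $ i - P y $ i) * (x $ i - y $ i)" for x y i
    using prox_firmly_nonexpansive[OF hs] by (simp add: P)
  show ?thesis
    unfolding P_def[symmetric]
  proof (intro conjI allI)
    fix x y :: "real^'n"
    show "wnorm_inf \<eta> (P x - P y) \<le> wnorm_inf \<eta> (x - y)"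
      using firmly_nonexpansive_real_abs_le(1)[OF coord] by (intro wnorm_inf_mono assms(5)) simp
    show "wnorm_inf \<eta> ((2 *\<^sub>R P x - x) - (2 *\<^sub>R P y - y)) \<le> wnorm_inf \<eta> (x - y)"
      using firmly_nonexpansive_real_abs_le(2)[OF coord]
      by (intro wnorm_inf_mono assms(5)) (simp add: algebra_simps)
  qed
qed

end
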